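(* None of the following formulae (with $p,q$ distinct atoms) is a theorem of $\mathsf{IELE}$: $(p\multimap q)\to\Box(p\to q)$ (the axiom $\mathsf{Box}$); $(p\to\Box q)\to(p\multimap q)$ (the axiom $\mathsf{Hug}$); $\neg\neg(p\to q)\to(p\multimap q)$ (the converse of $\mathsf{IR}$).
   Context: $\mathcal{L}_{\multimap}$ is the propositional language built from atoms, $\top,\bot,\wedge,\vee,\to$ and a binary connective $\multimap$; $\neg\varphi:=\varphi\to\bot$, $\Box\varphi:=\top\multimap\varphi$. $\mathsf{iA}$ is the least set of formulae containing all substitution instances of intuitionistic propositional tautologies and all instances of $((\varphi\multimap\psi)\wedge(\varphi\multimap\chi))\to(\varphi\multimap(\psi\wedge\chi))$, $((\varphi\multimap\chi)\wedge(\psi\multimap\chi))\to((\varphi\vee\psi)\multimap\chi)$, $((\varphi\multimap\psi)\wedge(\psi\multimap\chi))\to(\varphi\multimap\chi)$, closed under modus ponens and the rule: from $\varphi\to\psi$ infer $\varphi\multimap\psi$. $\Lambda\oplus\Gamma$ denotes the least extension of $\Lambda\cup\Gamma$ closed under modus ponens, that rule and uniform substitution. $\mathsf{IELE}:=\mathsf{iA}\oplus\{(\varphi\to\psi)\to(\varphi\multimap\psi)\}\oplus\{(\varphi\multimap\psi)\to\neg\neg(\varphi\to\psi)\}$ (all instances). *)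

theory Defs
  imports Main
begin

datatype fm =
    Atom nat
  | Top
  | Bot
  | And fm fm
  | Or fm fm
  | Imp fm fm
  | Str fm fm   (* the binary connective \<multimap> (strict implication) *)

definition Neg :: "fm \<Rightarrow> fm" where
  "Neg \<phi> = Imp \<phi> Bot"

definition Box :: "fm \<Rightarrow> fm" where
  "Box \<phi> = Str Top \<phi>"

fun subst :: "(nat \<Rightarrow> fm) \<Rightarrow> fm \<Rightarrow> fm" where
  "subst \<sigma> (Atom n) = \<sigma> n"
| "subst \<sigma> Top = Top"
| "subst \<sigma> Bot = Bot"
| "subst \<sigma> (And a b) = And (subst \<sigma> a) (subst \<sigma> b)"
| "subst \<sigma> (Or a b) = Or (subst \<sigma> a) (subst \<sigma> b)"
| "subst \<sigma> (Imp a b) = Imp (subst \<sigma> a) (subst \<sigma> b)"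
| "subst \<sigma> (Str a b) = Str (subst \<sigma> a) (subst \<sigma> b)"

fun pure :: "fm \<Rightarrow> bool" where
  "pure (Atom n) = True"
| "pure Top = True"
| "pure Bot = True"
| "pure (And a b) = (pure a \<and> pure b)"
| "pure (Or a b) = (pure a \<and> pure b)"
| "pure (Imp a b) = (pure a \<and> pure b)"
| "pure (Str a b) = False"

inductive ipc :: "fm \<Rightarrow> bool" where
  K: "ipc (Imp a (Imp b a))"
| S: "ipc (Imp (Imp a (Imp b c)) (Imp (Imp a b) (Imp a c)))"
| AndE1: "ipc (Imp (And a b) a)"
| AndE2: "ipc (Imp (And a b) b)"
| AndI: "ipc (Imp a (Imp b (And a b)))"
| OrI1: "ipc (Imp a (Or a b))"
| OrI2: "ipc (Imp b (Or a b))"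
| OrE: "ipc (Imp (Imp a c) (Imp (Imp b c) (Imp (Or a b) c)))"
| BotE: "ipc (Imp Bot a)"
| TopI: "ipc Top"
| MP: "ipc (Imp a b) \<Longrightarrow> ipc a \<Longrightarrow> ipc b"

definition int_taut :: "fm \<Rightarrow> bool" where
  "int_taut \<phi> \<longleftrightarrow> pure \<phi> \<and> ipc \<phi>"

inductive_set iA :: "fm set" where
  taut: "int_taut \<psi> \<Longrightarrow> subst \<sigma> \<psi> \<in> iA"
| ax_C: "Imp (And (Str a b) (Str a c)) (Str a (And b c)) \<in> iA"
| ax_D: "Imp (And (Str a c) (Str b c)) (Str (Or a b) c) \<in> iA"
| ax_I: "Imp (And (Str a b) (Str b c)) (Str a c) \<in> iA"
| mp: "Imp a b \<in> iA \<Longrightarrow> a \<in> iA \<Longrightarrow> b \<in> iA"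
| str_rule: "Imp a b \<in> iA \<Longrightarrow> Str a b \<in> iA"

inductive_set ext :: "fm set \<Rightarrow> fm set \<Rightarrow> fm set" for L G where
  base: "a \<in> L \<Longrightarrow> a \<in> ext L G"
| gen: "a \<in> G \<Longrightarrow> a \<in> ext L G"
| mp: "Imp a b \<in> ext L G \<Longrightarrow> a \<in> ext L G \<Longrightarrow> b \<in> ext L G"
| str_rule: "Imp a b \<in> ext L G \<Longrightarrow> Str a b \<in> ext L G"
| subst: "a \<in> ext L G \<Longrightarrow> subst \<sigma> a \<in> ext L G"

definition CP_ax :: "fm set" where
  "CP_ax = {Imp (Imp a b) (Str a b) | a b. True}"

definition IR_ax :: "fm set" where
  "IR_ax = {Imp (Str a b) (Neg (Neg (Imp a b))) | a b. True}"

definition IELE :: "fm set" where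
  "IELE = ext (ext iA CP_ax) IR_ax"

end

theory Submission
  imports Defs
begin

text \<open>
  Soundness with respect to an algebraic semantics. Interpret formulae in the five-element Heyting
  chain \<open>0 < 1 < 2 < 3 < 4\<close>, with \<open>\<multimap>\<close> read as the binary operation \<open>chain_str\<close>
  below, and call a formula valid if it takes the top value \<open>4\<close> under every valuation. The axioms
  of \<open>iA\<close>, \<open>CP\<close> and \<open>IR\<close> are valid, and validity is preserved by modus ponens, the
  \<open>\<multimap>\<close>-rule and substitution, so every theorem of \<open>IELE\<close> is valid. Each of the three
  formulae is refuted by a valuation with \<open>p \<mapsto> 3, q \<mapsto> 2\<close> or \<open>p \<mapsto> 2, q \<mapsto> 1\<close>.
\<close>

definition chain_imp :: "nat \<Rightarrow> nat \<Rightarrow> nat" where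
  "chain_imp a b = (if a \<le> b then 4 else b)"

definition chain_str :: "nat \<Rightarrow> nat \<Rightarrow> nat" where
  "chain_str a b =
     (if a \<le> b then 4 else if b = 0 then 0 else if b = 1 then 2 else if a = 3 then 4 else 3)"

text \<open>Valuations are arbitrary maps into \<open>nat\<close>; atoms are truncated at \<open>4\<close> so that every
  value lies in the chain.\<close>
fun eval :: "(nat \<Rightarrow> nat) \<Rightarrow> fm \<Rightarrow> nat" where
  "eval v (Atom n) = min (v n) 4"
| "eval v Top = 4"
| "eval v Bot = 0"
| "eval v (And a b) = min (eval v a) (eval v b)"
| "eval v (Or a b) = max (eval v a) (eval v b)"
| "eval v (Imp a b) = chain_imp (eval v a) (eval v b)"
| "eval v (Str a b) = chain_str (eval v a) (eval v b)"

definition valid :: "fm \<Rightarrow> bool" where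
  "valid a \<longleftrightarrow> (\<forall>v. eval v a = 4)"

lemma eval_le_4: "eval v a \<le> 4"
  by (induction a) (auto simp: chain_imp_def chain_str_def)

lemma chain_cases: "(x::nat) \<le> 4 \<Longrightarrow> x = 0 \<or> x = 1 \<or> x = 2 \<or> x = 3 \<or> x = 4"
  by arith

lemma eval_subst: "eval v (subst \<sigma> a) = eval (\<lambda>n. eval v (\<sigma> n)) a"
  by (induction a) (auto simp: eval_le_4 min_def)

lemma valid_subst: "valid a \<Longrightarrow> valid (subst \<sigma> a)"
  unfolding valid_def by (simp add: eval_subst)

lemma valid_mp:
  assumes "valid (Imp a b)" and "valid a"
  shows "valid b"
  unfolding valid_def
proof
  fix v
  have "chain_imp (eval v a) (eval v b) = 4" and "eval v a = 4"
    using assms by (auto simp: valid_def)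
  then show "eval v b = 4"
    using eval_le_4[of v b] by (auto simp: chain_imp_def split: if_splits)
qed

lemma valid_str_rule:
  assumes "valid (Imp a b)"
  shows "valid (Str a b)"
  unfolding valid_def
proof
  fix v
  have "chain_imp (eval v a) (eval v b) = 4"
    using assms by (auto simp: valid_def)
  then show "eval v (Str a b) = 4"
    using eval_le_4[of v a] eval_le_4[of v b]
    by (auto simp: chain_imp_def chain_str_def split: if_splits)
qed

lemma ipc_valid: "ipc a \<Longrightarrow> valid a"
proof (induction rule: ipc.induct)
  case (MP a b)
  then show ?case using valid_mp by blast
qed (auto simp: valid_def chain_imp_def)

lemma chain_str_ax_C:
  "a \<le> 4 \<Longrightarrow> b \<le> 4 \<Longrightarrow> c \<le> 4 \<Longrightarrow>
    chain_imp (min (chain_str a b) (chain_str a c)) (chain_str a (min b c)) = 4"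
  by (auto dest!: chain_cases simp: chain_imp_def chain_str_def)

lemma chain_str_ax_D:
  "a \<le> 4 \<Longrightarrow> b \<le> 4 \<Longrightarrow> c \<le> 4 \<Longrightarrow>
    chain_imp (min (chain_str a c) (chain_str b c)) (chain_str (max a b) c) = 4"
  by (auto dest!: chain_cases simp: chain_imp_def chain_str_def)

lemma chain_str_ax_I:
  "a \<le> 4 \<Longrightarrow> b \<le> 4 \<Longrightarrow> c \<le> 4 \<Longrightarrow>
    chain_imp (min (chain_str a b) (chain_str b c)) (chain_str a c) = 4"
  by (auto dest!: chain_cases simp: chain_imp_def chain_str_def)

lemma chain_str_ax_CP:
  "a \<le> 4 \<Longrightarrow> b \<le> 4 \<Longrightarrow> chain_imp (chain_imp a b) (chain_str a b) = 4"
  by (auto dest!: chain_cases simp: chain_imp_def chain_str_def)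

lemma chain_str_ax_IR:
  "a \<le> 4 \<Longrightarrow> b \<le> 4 \<Longrightarrow>
    chain_imp (chain_str a b) (chain_imp (chain_imp (chain_imp a b) 0) 0) = 4"
  by (auto dest!: chain_cases simp: chain_imp_def chain_str_def)

lemma iA_valid: "a \<in> iA \<Longrightarrow> valid a"
proof (induction rule: iA.induct)
  case (taut \<psi> \<sigma>)
  then show ?case using ipc_valid valid_subst int_taut_def by blast
next
  case (ax_C a b c)
  then show ?case by (simp add: valid_def chain_str_ax_C eval_le_4)
next
  case (ax_D a c b)
  then show ?case by (simp add: valid_def chain_str_ax_D eval_le_4)
next
  case (ax_I a b c)
  then show ?case by (simp add: valid_def chain_str_ax_I eval_le_4)
next
  case (mp a b)
  then show ?case using valid_mp by blast
next
  case (str_rule a b)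
  then show ?case using valid_str_rule by blast
qed

lemma ext_valid:
  assumes "\<And>a. a \<in> L \<Longrightarrow> valid a" and "\<And>a. a \<in> G \<Longrightarrow> valid a"
  shows "a \<in> ext L G \<Longrightarrow> valid a"
proof (induction rule: ext.induct)
  case (mp a b)
  then show ?case using valid_mp by blast
next
  case (str_rule a b)
  then show ?case using valid_str_rule by blast
next
  case (subst a \<sigma>)
  then show ?case using valid_subst by blast
qed (use assms in auto)

lemma CP_ax_valid: "a \<in> CP_ax \<Longrightarrow> valid a"
  by (auto simp: CP_ax_def valid_def chain_str_ax_CP eval_le_4)

lemma IR_ax_valid: "a \<in> IR_ax \<Longrightarrow> valid a"
  by (auto simp: IR_ax_def valid_def Neg_def chain_str_ax_IR eval_le_4)

lemma IELE_valid: "a \<in> IELE \<Longrightarrow> valid a"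
  unfolding IELE_def
proof (rule ext_valid)
  show "valid a" if "a \<in> ext iA CP_ax" for a
    using that by (rule ext_valid[rotated 2]) (use iA_valid CP_ax_valid in blast)+
qed (rule IR_ax_valid)

lemma not_valid_Box_ax:
  assumes "p \<noteq> q"
  shows "\<not> valid (Imp (Str (Atom p) (Atom q)) (Box (Imp (Atom p) (Atom q))))"
proof -
  let ?v = "\<lambda>n. if n = p then 3 else 2 :: nat"
  have "eval ?v (Imp (Str (Atom p) (Atom q)) (Box (Imp (Atom p) (Atom q)))) \<noteq> 4"
    using assms by (simp add: Box_def chain_imp_def chain_str_def)
  then show ?thesis unfolding valid_def by blast
qed

lemma not_valid_Hug_ax:
  assumes "p \<noteq> q"
  shows "\<not> valid (Imp (Imp (Atom p) (Box (Atom q))) (Str (Atom p) (Atom q)))"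
proof -
  let ?v = "\<lambda>n. if n = p then 2 else 1 :: nat"
  have "eval ?v (Imp (Imp (Atom p) (Box (Atom q))) (Str (Atom p) (Atom q))) \<noteq> 4"
    using assms by (simp add: Box_def chain_imp_def chain_str_def)
  then show ?thesis unfolding valid_def by blast
qed

lemma not_valid_IR_converse:
  assumes "p \<noteq> q"
  shows "\<not> valid (Imp (Neg (Neg (Imp (Atom p) (Atom q)))) (Str (Atom p) (Atom q)))"
proof -
  let ?v = "\<lambda>n. if n = p then 2 else 1 :: nat"
  have "eval ?v (Imp (Neg (Neg (Imp (Atom p) (Atom q)))) (Str (Atom p) (Atom q))) \<noteq> 4"
    using assms by (simp add: Neg_def chain_imp_def chain_str_def)
  then show ?thesis unfolding valid_def by blast
qed

theorem proposition3p10: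
  fixes p q :: nat
  assumes "p \<noteq> q"
  shows "Imp (Str (Atom p) (Atom q)) (Box (Imp (Atom p) (Atom q))) \<notin> IELE \<and>
         Imp (Imp (Atom p) (Box (Atom q))) (Str (Atom p) (Atom q)) \<notin> IELE \<and>
         Imp (Neg (Neg (Imp (Atom p) (Atom q)))) (Str (Atom p) (Atom q)) \<notin> IELE"
  using IELE_valid not_valid_Box_ax[OF assms] not_valid_Hug_ax[OF assms]
    not_valid_IR_converse[OF assms]
  by blast

end
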